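(* Let $a\in\mathbb{R}^n$ with $a_1=0$. For each integer $j\ge0$ and each $k\in\{0,1,\dots,\log n\}$ define $b_{j,k}:=a_{1+2^k j}$, with the convention $b_{j,k}=0$ if $1+2^kj>n$. Then $$\max_{j\in[n]}a_j^2\le(\log n)\sum_{k=0}^{(\log n)-1}\sum_{j=1}^n(b_{j,k}-b_{j-1,k})^2.$$
   Context: Here $\log$ denotes the base-2 logarithm and $n$ is a power of $2$, so that $\log n$ is an integer. *)

theory Defs
  imports Complex_Main
begin

text \<open>The vector a in R^n is represented as a function on indices 1..n.
  b a n j k = a_(1 + 2^k j) if 1 + 2^k j <= n, and 0 otherwise.\<close>
definition bseq :: "(nat \<Rightarrow> real) \<Rightarrow> nat \<Rightarrow> nat \<Rightarrow> nat \<Rightarrow> real" where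
  "bseq a n j k = (if 1 + 2^k * j \<le> n then a (1 + 2^k * j) else 0)"

end

theory Submission
  imports Defs "HOL-Analysis.Convex"
begin

text \<open>Write \<open>x = j - 1\<close> in binary and round it down to multiples of \<open>2^k\<close> for
  \<open>k = m, m - 1, \<dots>, 0\<close>. This walks from index \<open>1\<close> (where \<open>a\<close> vanishes) to index \<open>j\<close>,
  and the step at level \<open>k\<close> is either trivial or one increment \<open>b(i,k) - b(i-1,k)\<close> of the
  \<open>k\<close>-th subsampled sequence. Hence \<open>a(j)\<close> is a sum of \<open>m\<close> terms, the \<open>k\<close>-th bounded in
  square by the \<open>k\<close>-th energy, and Cauchy-Schwarz gives the factor \<open>m\<close>.\<close>

definition level_energy :: "(nat \<Rightarrow> real) \<Rightarrow> nat \<Rightarrow> nat \<Rightarrow> real" where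
  "level_energy a n k = (\<Sum>i=1..n. (bseq a n i k - bseq a n (i - 1) k)^2)"

lemma level_energy_nonneg: "level_energy a n k \<ge> 0"
  unfolding level_energy_def by (simp add: sum_nonneg)

lemma dyadic_step_square_le_level_energy:
  assumes "2^k * i < n"
  shows "(a (1 + 2^k * i) - a (1 + 2^k * (2 * (i div 2))))^2 \<le> level_energy a n k"
proof (cases "even i")
  case True
  then show ?thesis by (simp add: level_energy_nonneg)
next
  case False
  then have i: "2 * (i div 2) = i - 1" "i \<ge> 1"
    by (auto elim: oddE)
  have "i \<le> 2^k * i" "2^k * (i - 1) \<le> 2^k * i" by simp_all
  with assms i(2) have i_le: "i \<le> n" "1 + 2^k * (i - 1) \<le> n" by linarith+
  have "(a (1 + 2^k * i) - a (1 + 2^k * (2 * (i div 2))))^2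
      = (bseq a n i k - bseq a n (i - 1) k)^2"
    using assms i i_le by (simp add: bseq_def)
  also have "\<dots> \<le> level_energy a n k"
    unfolding level_energy_def
    by (rule member_le_sum[where f = "\<lambda>i. (bseq a n i k - bseq a n (i - 1) k)^2"])
      (use i(2) i_le(1) in auto)
  finally show ?thesis .
qed

lemma dyadic_telescope:
  fixes a :: "nat \<Rightarrow> 'a::ab_group_add"
  assumes "x < 2^m"
  shows "a (1 + x) - a 1
    = (\<Sum>k<m. a (1 + 2^k * (x div 2^k)) - a (1 + 2^k * (2 * (x div 2^k div 2))))"
proof -
  define f where "f k = a (1 + 2^k * (x div 2^k))" for k
  have round_down_Suc: "2^k * (2 * (x div 2^k div 2)) = 2^Suc k * (x div 2^Suc k)" for k
    by (metis div_mult2_eq mult.assoc power_Suc2)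
  have "(\<Sum>k<m. a (1 + 2^k * (x div 2^k)) - a (1 + 2^k * (2 * (x div 2^k div 2))))
      = (\<Sum>k<m. f k - f (Suc k))"
    by (simp only: f_def round_down_Suc)
  also have "\<dots> = f 0 - f m"
    by (rule sum_lessThan_telescope')
  also have "\<dots> = a (1 + x) - a 1"
    using assms by (simp add: f_def)
  finally show ?thesis ..
qed

lemma square_le_log_mult_level_energies:
  assumes "n = 2^m" and "a 1 = 0" and "j \<in> {1..n}"
  shows "(a j)^2 \<le> real m * (\<Sum>k<m. level_energy a n k)"
proof -
  define x where "x = j - 1"
  define step where "step k = a (1 + 2^k * (x div 2^k)) - a (1 + 2^k * (2 * (x div 2^k div 2)))"
    for k
  have x: "x < 2^m" "j = 1 + x"
    using assms unfolding x_def by auto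
  have "a j = (\<Sum>k<m. step k)"
    using dyadic_telescope[OF \<open>x < 2^m\<close>, of a] x assms(2) unfolding step_def by simp
  then have "(a j)^2 \<le> (\<Sum>k<m. (step k)^2) * real m"
    using sum_squared_le_sum_of_squares[of step "{..<m}"] by simp
  also have "\<dots> \<le> (\<Sum>k<m. level_energy a n k) * real m"
  proof (intro mult_right_mono sum_mono)
    fix k
    have "2^k * (x div 2^k) \<le> x" by simp
    then have "2^k * (x div 2^k) < n" using x assms(1) by linarith
    then show "(step k)^2 \<le> level_energy a n k"
      unfolding step_def by (rule dyadic_step_square_le_level_energy)
  qed simp
  finally show ?thesis by (simp add: mult.commute)
qed

theorem claimC3:
  fixes a :: "nat \<Rightarrow> real" and n m :: nat
  assumes "n = 2 ^ m" and "a 1 = 0"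
  shows "(MAX j\<in>{1..n}. (a j)^2)
           \<le> real m * (\<Sum>k<m. \<Sum>j=1..n. (bseq a n j k - bseq a n (j - 1) k)^2)"
proof -
  have "{1..n} \<noteq> {}" using assms(1) by simp
  then show ?thesis
    using square_le_log_mult_level_energies[of n m a] assms
    by (simp add: level_energy_def)
qed

end
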